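(* Assume GCH. Let $F:[\aleph_\omega]^\omega\to[[\aleph_\omega]^\omega]^\omega$ be any function. Then there is an enumeration $\{a_{\alpha,j}:\alpha<\aleph_{\omega+1},\ j<\omega_1\}$ of $[\aleph_\omega]^\omega$ without repetition such that for each $\alpha<\aleph_{\omega+1}$ and $j<\omega_1$: if $x\in[a_{\alpha,j}]^\omega$ then $F(x)\subseteq\{a_{\eta,i}:\eta\le\alpha,\ i<\omega_1\}$.
   Context: For a set $S$, $[S]^\omega$ denotes the family of countably infinite subsets of $S$. *)

theory Defs
  imports Main "HOL-Library.Countable_Set"
begin

definition ctbl_subsets :: "'a set \<Rightarrow> 'a set set" where
  "ctbl_subsets S = {x. x \<subseteq> S \<and> countable x \<and> infinite x}"

definition GCH_on_type :: "'a itself \<Rightarrow> bool" where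
  "GCH_on_type _ \<longleftrightarrow> (\<forall>A :: 'a set. infinite A \<longrightarrow> (card_of (Pow A), cardSuc (card_of A)) \<in> ordIso)"

definition is_aleph_omega :: "'a set \<Rightarrow> bool" where
  "is_aleph_omega X \<longleftrightarrow> (\<exists>Xs :: nat \<Rightarrow> 'a set.
      countable (Xs 0) \<and> infinite (Xs 0) \<and>
      (\<forall>n. Xs n \<subseteq> Xs (Suc n) \<and> (card_of (Xs (Suc n)), cardSuc (card_of (Xs n))) \<in> ordIso) \<and>
      X = (\<Union>n. Xs n))"

end

(*
  Under GCH, a countable set a has at most 2^aleph_0 = aleph_1 countable subsets, so closing a set
  of at most aleph_1 elements of [X]^omega under a \<mapsto> \<Union>{F x | x \<in> [a]^omega} leaves it of size
  at most aleph_1. Since cf aleph_omega = omega, a diagonal argument gives |[X]^omega| > aleph_omega,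
  hence |[X]^omega| = 2^aleph_omega = aleph_(omega+1).

  Enumerate [X]^omega as (s_alpha), alpha < aleph_(omega+1), and define disjoint layers by
  transfinite recursion: L_alpha is the closure of s_alpha together with aleph_1 fresh elements,
  minus the earlier layers (whose union has at most aleph_omega elements, so fresh elements exist).
  Every layer has exactly aleph_1 elements, the layers partition [X]^omega, and F maps countable
  subsets of members of L_alpha into the union of the L_eta with eta \<le> alpha. Enumerating each
  layer by omega_1 gives the required enumeration.
*)

theory Submission
  imports Defs "HOL-Library.Countable_Set_Type" "HOL-Library.Disjoint_Sets"
begin

unbundle cardinal_syntax

lemma card_of_countable_ordLeq_infinite:
  assumes "countable A" "infinite B"
  shows "|A| \<le>o |B|"
  using assms(1)[unfolded countable_card_of_nat] assms(2)[unfolded infinite_iff_card_of_nat]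
  by (rule ordLeq_transitive)

lemma card_of_countable_infinite:
  assumes "countable A" "infinite A"
  shows "|A| =o natLeq"
proof -
  have "|A| =o |UNIV :: nat set|" using countable_or_card_of[OF assms(1)] assms(2) by simp
  then show ?thesis using card_of_nat by (rule ordIso_transitive)
qed

lemma card_of_Un_ordLeq_infinite:
  assumes "infinite C" "|A| \<le>o |C|" "|B| \<le>o |C|"
  shows "|A \<union> B| \<le>o |C|"
  by (rule card_of_Un_ordLeq_infinite_Field[of "|C|", unfolded Field_card_of,
        OF assms card_of_card_order_on])

lemma card_of_insert_ordLeq_infinite:
  assumes "infinite C" "|A| \<le>o |C|"
  shows "|insert x A| \<le>o |C|"
proof -
  have "|{x}| \<le>o |C|" using assms(1) by (intro card_of_singl_ordLeq) auto
  then show ?thesis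
    unfolding insert_is_Un[of x A] by (rule card_of_Un_ordLeq_infinite[OF assms(1) _ assms(2)])
qed

lemma exists_subset_Diff_card_of:
  assumes "infinite M" "|E| \<le>o |M|" "|M| <o |S|" "|W| \<le>o |M|"
  shows "\<exists>P \<subseteq> S - E. |P| =o |W|"
proof -
  have "\<not> |S - E| \<le>o |M|"
  proof
    assume "|S - E| \<le>o |M|"
    then have "|(S - E) \<union> E| \<le>o |M|" by (rule card_of_Un_ordLeq_infinite[OF assms(1) _ assms(2)])
    then have "|S| \<le>o |M|" by (rule ordLeq_transitive[OF card_of_mono1, rotated]) blast
    with not_ordLess_ordLeq[OF assms(3)] show False by contradiction
  qed
  then have "|M| <o |S - E|"
    using not_ordLeq_iff_ordLess[OF card_of_Well_order card_of_Well_order] by blast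
  then have "|W| \<le>o |S - E|" by (rule ordLess_imp_ordLeq[OF ordLeq_ordLess_trans[OF assms(4)]])
  then have "\<exists>P \<subseteq> S - E. |W| =o |P| \<and> |P| \<le>o |S - E|"
    by (rule internalize_card_of_ordLeq2[THEN iffD1])
  then show ?thesis by (meson ordIso_symmetric)
qed

lemma bij_betw_partition_enumeration:
  assumes "disjoint_family_on L K" "\<And>\<alpha>. \<alpha> \<in> K \<Longrightarrow> |L \<alpha>| =o |W|"
  obtains a where "bij_betw (\<lambda>(\<alpha>, j). a \<alpha> j) (K \<times> W) (\<Union>\<alpha>\<in>K. L \<alpha>)"
    "\<And>\<alpha>. \<alpha> \<in> K \<Longrightarrow> a \<alpha> ` W = L \<alpha>"
proof -
  have "\<exists>f. bij_betw f W (L \<alpha>)" if "\<alpha> \<in> K" for \<alpha>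
    using card_of_ordIso[THEN iffD2, OF ordIso_symmetric[OF assms(2)[OF that]]] .
  then obtain a where a: "\<And>\<alpha>. \<alpha> \<in> K \<Longrightarrow> bij_betw (a \<alpha>) W (L \<alpha>)" by metis
  have "bij_betw (\<lambda>(\<alpha>, j). a \<alpha> j) ({\<alpha>} \<times> W) (L \<alpha>)" if "\<alpha> \<in> K" for \<alpha>
  proof -
    have "(\<lambda>(\<alpha>, j). a \<alpha> j) ` ({\<alpha>} \<times> W) = a \<alpha> ` W" by force
    then show ?thesis using a[OF that] by (auto simp: bij_betw_def inj_on_def)
  qed
  then have "bij_betw (\<lambda>(\<alpha>, j). a \<alpha> j) (\<Union>\<alpha>\<in>K. {\<alpha>} \<times> W) (\<Union>\<alpha>\<in>K. L \<alpha>)"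
    by (rule bij_betw_UNION_disjoint[OF assms(1)])
  moreover have "(\<Union>\<alpha>\<in>K. {\<alpha>} \<times> W) = K \<times> W" by blast
  ultimately show ?thesis using that bij_betw_imp_surj_on[OF a] by simp
qed

definition closure_step :: "('b \<Rightarrow> 'b set) \<Rightarrow> 'b set \<Rightarrow> 'b set" where
  "closure_step G B = B \<union> \<Union>(G ` B)"

definition closure_under :: "('b \<Rightarrow> 'b set) \<Rightarrow> 'b set \<Rightarrow> 'b set" where
  "closure_under G A = (\<Union>n. (closure_step G ^^ n) A)"

lemma closure_under_upper: "A \<subseteq> closure_under G A"
  unfolding closure_under_def using UN_upper[of 0 UNIV "\<lambda>n. (closure_step G ^^ n) A"] by simp

lemma closure_under_closed:
  assumes "b \<in> closure_under G A"
  shows "G b \<subseteq> closure_under G A"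
proof -
  from assms obtain n where "b \<in> (closure_step G ^^ n) A" unfolding closure_under_def by blast
  then have "G b \<subseteq> (closure_step G ^^ Suc n) A" by (auto simp: closure_step_def)
  then show ?thesis unfolding closure_under_def by blast
qed

lemma closure_under_least:
  assumes "A \<subseteq> T" "\<And>b. b \<in> T \<Longrightarrow> G b \<subseteq> T"
  shows "closure_under G A \<subseteq> T"
proof -
  have "(closure_step G ^^ n) A \<subseteq> T" for n
  proof (induction n)
    case (Suc n)
    then show ?case using assms(2) by (auto simp: closure_step_def)
  qed (simp add: assms(1))
  then show ?thesis unfolding closure_under_def by blast
qed

lemma card_of_closure_under:
  assumes "infinite W" "|A| \<le>o |W|" "\<And>b. b \<in> closure_under G A \<Longrightarrow> |G b| \<le>o |W|"
  shows "|closure_under G A| \<le>o |W|"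
proof -
  have iterate: "|(closure_step G ^^ n) A| \<le>o |W|" for n
  proof (induction n)
    case 0
    then show ?case using assms(2) by simp
  next
    case (Suc n)
    let ?B = "(closure_step G ^^ n) A"
    have "?B \<subseteq> closure_under G A" unfolding closure_under_def by blast
    then have "\<forall>b\<in>?B. |G b| \<le>o |W|" using assms(3) by blast
    then have "|\<Union>(G ` ?B)| \<le>o |W|" by (rule card_of_UNION_ordLeq_infinite[OF assms(1) Suc.IH])
    then have "|?B \<union> \<Union>(G ` ?B)| \<le>o |W|" by (rule card_of_Un_ordLeq_infinite[OF assms(1) Suc.IH])
    then show ?case by (simp only: funpow.simps comp_apply closure_step_def[of G ?B])
  qed
  have "|UNIV :: nat set| \<le>o |W|"
    by (rule card_of_countable_ordLeq_infinite[OF countableI_type assms(1)])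
  then show ?thesis unfolding closure_under_def
    by (rule card_of_UNION_ordLeq_infinite[OF assms(1)]) (simp add: iterate)
qed

locale bounded_operation =
  fixes S :: "'b set" and G :: "'b \<Rightarrow> 'b set" and M :: "'c set" and W :: "'d set"
  assumes infinite_M: "infinite M"
    and infinite_W: "infinite W"
    and card_W: "|W| \<le>o |M|"
    and card_S: "|S| =o cardSuc |M|"
    and G_subset: "b \<in> S \<Longrightarrow> G b \<subseteq> S"
    and card_G: "b \<in> S \<Longrightarrow> |G b| \<le>o |W|"
begin

abbreviation stages :: "'c set set" where
  "stages \<equiv> Field (cardSuc |M| )"

lemma Card_order_cardSuc: "Card_order (cardSuc |M| )"
  by (rule cardSuc_Card_order[OF card_of_Card_order])

lemma wo_rel_cardSuc: "wo_rel (cardSuc |M| )"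
  unfolding wo_rel_def using Card_order_cardSuc by (rule card_order_on_well_order_on)

lemma card_of_underS_stage:
  assumes "\<alpha> \<in> stages"
  shows "|underS (cardSuc |M| ) \<alpha>| \<le>o |M|"
  using cardSuc_ordLeq_ordLess[OF card_of_Card_order card_of_Card_order, THEN iffD1,
      OF card_of_underS[OF Card_order_cardSuc assms]] .

lemma underS_stages: "underS (cardSuc |M| ) \<alpha> \<subseteq> stages"
  unfolding underS_def Field_def by blast

definition seed :: "'c set \<Rightarrow> 'b" where
  "seed = (SOME s. bij_betw s stages S)"

lemma bij_betw_seed: "bij_betw seed stages S"
proof -
  have "|stages| =o |S|"
    by (rule ordIso_transitive[OF card_of_Field_ordIso[OF Card_order_cardSuc]
          ordIso_symmetric[OF card_S]])
  then obtain s where "bij_betw s stages S" using card_of_ordIso[THEN iffD2] by blast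
  then show ?thesis unfolding seed_def by (rule someI[where P = "\<lambda>s. bij_betw s stages S"])
qed

(* The junk value {} makes the bound |fresh E| \<le>o |W| unconditional. *)
definition fresh :: "'b set \<Rightarrow> 'b set" where
  "fresh E = (if |E| \<le>o |M| then SOME P. P \<subseteq> S - E \<and> |P| =o |W| else {})"

lemma fresh:
  assumes "|E| \<le>o |M|"
  shows "fresh E \<subseteq> S - E" "|fresh E| =o |W|"
proof -
  have "|M| <o |S|"
    by (rule ordLess_ordIso_trans[OF cardSuc_greater[OF card_of_Card_order]
          ordIso_symmetric[OF card_S]])
  then have "\<exists>P. P \<subseteq> S - E \<and> |P| =o |W|"
    using exists_subset_Diff_card_of[OF infinite_M assms _ card_W] by blast
  then show "fresh E \<subseteq> S - E" "|fresh E| =o |W|"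
    unfolding fresh_def using assms someI_ex[of "\<lambda>P. P \<subseteq> S - E \<and> |P| =o |W|"] by simp_all
qed

lemma fresh_subset: "fresh E \<subseteq> S - E"
  using fresh(1) by (cases "|E| \<le>o |M|") (auto simp: fresh_def)

lemma card_of_fresh_ordLeq: "|fresh E| \<le>o |W|"
  using ordIso_imp_ordLeq[OF fresh(2)] by (cases "|E| \<le>o |M|") (auto simp: fresh_def card_of_empty)

(* The fresh elements make each layer as large as W; the seeds make the layers cover S. *)
definition layer :: "'c set \<Rightarrow> 'b set" where
  "layer = wo_rel.worec (cardSuc |M| ) (\<lambda>L \<alpha>.
     let E = \<Union>(L ` underS (cardSuc |M| ) \<alpha>) in closure_under G (insert (seed \<alpha>) (fresh E)) - E)"

definition earlier_layers :: "'c set \<Rightarrow> 'b set" where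
  "earlier_layers \<alpha> = \<Union>(layer ` underS (cardSuc |M| ) \<alpha>)"

abbreviation layer_closure :: "'c set \<Rightarrow> 'b set" where
  "layer_closure \<alpha> \<equiv> closure_under G (insert (seed \<alpha>) (fresh (earlier_layers \<alpha>)))"

lemma layer_eq: "layer \<alpha> = layer_closure \<alpha> - earlier_layers \<alpha>"
proof -
  let ?H = "\<lambda>L \<alpha>. let E = \<Union>(L ` underS (cardSuc |M| ) \<alpha>) in
              closure_under G (insert (seed \<alpha>) (fresh E)) - E"
  have "wo_rel.adm_wo (cardSuc |M| ) ?H"
    unfolding wo_rel.adm_wo_def[OF wo_rel_cardSuc]
  proof (intro allI impI)
    fix f g :: "'c set \<Rightarrow> 'b set" and \<alpha>
    assume "\<forall>\<eta>\<in>underS (cardSuc |M| ) \<alpha>. f \<eta> = g \<eta>"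
    then have "f ` underS (cardSuc |M| ) \<alpha> = g ` underS (cardSuc |M| ) \<alpha>" by (intro image_cong) auto
    then show "?H f \<alpha> = ?H g \<alpha>" by simp
  qed
  then have "layer = ?H layer"
    unfolding layer_def by (rule wo_rel.worec_fixpoint[OF wo_rel_cardSuc])
  from fun_cong[OF this, of \<alpha>] show ?thesis unfolding Let_def earlier_layers_def .
qed

lemma layer_closure_subset:
  assumes "\<alpha> \<in> stages"
  shows "layer_closure \<alpha> \<subseteq> S"
  using bij_betwE[OF bij_betw_seed] assms fresh_subset G_subset
  by (intro closure_under_least) auto

lemma card_of_layer_ordLeq:
  assumes "\<alpha> \<in> stages"
  shows "|layer \<alpha>| \<le>o |W|"
proof -
  have "|layer_closure \<alpha>| \<le>o |W|"
    using card_of_closure_under[OF infinite_W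
        card_of_insert_ordLeq_infinite[OF infinite_W card_of_fresh_ordLeq]]
      card_G layer_closure_subset[OF assms] by blast
  then show ?thesis
    unfolding layer_eq[of \<alpha>] by (rule ordLeq_transitive[OF card_of_mono1, rotated]) blast
qed

lemma card_of_earlier_layers:
  assumes "\<alpha> \<in> stages"
  shows "|earlier_layers \<alpha>| \<le>o |M|"
  unfolding earlier_layers_def
proof (rule card_of_UNION_ordLeq_infinite[OF infinite_M card_of_underS_stage[OF assms]], rule ballI)
  fix \<eta> assume "\<eta> \<in> underS (cardSuc |M| ) \<alpha>"
  then show "|layer \<eta>| \<le>o |M|"
    using ordLeq_transitive[OF card_of_layer_ordLeq card_W] underS_stages by blast
qed

lemma card_of_layer:
  assumes "\<alpha> \<in> stages"
  shows "|layer \<alpha>| =o |W|"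
proof -
  have "fresh (earlier_layers \<alpha>) \<subseteq> layer \<alpha>"
    using closure_under_upper[of "insert (seed \<alpha>) (fresh (earlier_layers \<alpha>))" G]
      fresh_subset[of "earlier_layers \<alpha>"]
    unfolding layer_eq[of \<alpha>] by blast
  then have "|W| \<le>o |layer \<alpha>|"
    by (rule ordIso_ordLeq_trans[OF
          ordIso_symmetric[OF fresh(2)[OF card_of_earlier_layers[OF assms]]] card_of_mono1])
  with card_of_layer_ordLeq[OF assms] show ?thesis by (simp only: ordIso_iff_ordLeq)
qed

lemma disjoint_family_on_layer: "disjoint_family_on layer stages"
  unfolding disjoint_family_on_def
proof (intro ballI impI)
  have earlier: "layer \<alpha> \<inter> layer \<beta> = {}" if "\<alpha> \<in> underS (cardSuc |M| ) \<beta>" for \<alpha> \<beta>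
    using that layer_eq[of \<beta>] unfolding earlier_layers_def by blast
  fix \<alpha> \<beta> assume "\<alpha> \<in> stages" "\<beta> \<in> stages" "\<alpha> \<noteq> \<beta>"
  then have "\<alpha> \<in> underS (cardSuc |M| ) \<beta> \<or> \<beta> \<in> underS (cardSuc |M| ) \<alpha>"
    using wo_rel.TOTALS[OF wo_rel_cardSuc] unfolding underS_def by blast
  then show "layer \<alpha> \<inter> layer \<beta> = {}" using earlier by blast
qed

lemma layer_closure_subset_layers:
  assumes "\<alpha> \<in> stages"
  shows "layer_closure \<alpha> \<subseteq> (\<Union>\<eta>\<in>under (cardSuc |M| ) \<alpha>. layer \<eta>)"
proof -
  have "\<alpha> \<in> under (cardSuc |M| ) \<alpha>"
    by (rule Refl_under_in[OF wo_rel.REFL[OF wo_rel_cardSuc] assms])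
  have "layer_closure \<alpha> \<subseteq> layer \<alpha> \<union> earlier_layers \<alpha>"
    unfolding layer_eq[of \<alpha>] by blast
  also have "\<dots> \<subseteq> (\<Union>\<eta>\<in>under (cardSuc |M| ) \<alpha>. layer \<eta>)"
    using \<open>\<alpha> \<in> under (cardSuc |M| ) \<alpha>\<close> underS_subset_under[of "cardSuc |M|" \<alpha>]
    unfolding earlier_layers_def by blast
  finally show ?thesis .
qed

lemma UN_layer: "(\<Union>\<alpha>\<in>stages. layer \<alpha>) = S"
proof
  show "(\<Union>\<alpha>\<in>stages. layer \<alpha>) \<subseteq> S"
    using layer_closure_subset unfolding layer_eq by blast
  show "S \<subseteq> (\<Union>\<alpha>\<in>stages. layer \<alpha>)"
  proof
    fix y assume "y \<in> S"
    then obtain \<alpha> where \<alpha>: "\<alpha> \<in> stages" "y = seed \<alpha>"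
      using bij_betw_imp_surj_on[OF bij_betw_seed] by blast
    have "seed \<alpha> \<in> layer_closure \<alpha>"
      using closure_under_upper[of "insert (seed \<alpha>) (fresh (earlier_layers \<alpha>))" G] by blast
    then show "y \<in> (\<Union>\<alpha>\<in>stages. layer \<alpha>)"
      using layer_closure_subset_layers[OF \<alpha>(1)] under_Field[of "cardSuc |M|" \<alpha>] \<alpha>(2) by blast
  qed
qed

theorem ex_layered_enumeration:
  "\<exists>a. bij_betw (\<lambda>(\<alpha>, j). a \<alpha> j) (stages \<times> W) S \<and>
     (\<forall>\<alpha>\<in>stages. \<forall>j\<in>W. G (a \<alpha> j) \<subseteq> {a \<eta> i | \<eta> i. \<eta> \<in> stages \<and> (\<eta>, \<alpha>) \<in> cardSuc |M| \<and> i \<in> W})"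
proof -
  obtain a where a: "bij_betw (\<lambda>(\<alpha>, j). a \<alpha> j) (stages \<times> W) (\<Union>\<alpha>\<in>stages. layer \<alpha>)"
    and a_layer: "\<And>\<alpha>. \<alpha> \<in> stages \<Longrightarrow> a \<alpha> ` W = layer \<alpha>"
    using bij_betw_partition_enumeration[OF disjoint_family_on_layer card_of_layer] by blast
  have "G (a \<alpha> j) \<subseteq> {a \<eta> i | \<eta> i. \<eta> \<in> stages \<and> (\<eta>, \<alpha>) \<in> cardSuc |M| \<and> i \<in> W}"
    if "\<alpha> \<in> stages" "j \<in> W" for \<alpha> j
  proof -
    have "a \<alpha> j \<in> layer_closure \<alpha>"
      using a_layer[OF that(1)] that(2) unfolding layer_eq[of \<alpha>] by blast
    then have "G (a \<alpha> j) \<subseteq> layer_closure \<alpha>" by (rule closure_under_closed)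
    also have "\<dots> \<subseteq> (\<Union>\<eta>\<in>under (cardSuc |M| ) \<alpha>. layer \<eta>)"
      by (rule layer_closure_subset_layers[OF that(1)])
    also have "\<dots> = (\<Union>\<eta>\<in>under (cardSuc |M| ) \<alpha>. a \<eta> ` W)"
      using a_layer under_Field[of "cardSuc |M|" \<alpha>] by (intro SUP_cong) auto
    finally show ?thesis unfolding under_def Field_def by blast
  qed
  then show ?thesis using a unfolding UN_layer by blast
qed

end

lemma card_of_ctbl_subsets_not_ordLeq:
  assumes chain: "\<And>n. Xs n \<subseteq> Xs (Suc n)" and "infinite (Xs 0)"
    and grow: "\<And>n. |Xs n| <o |Xs (Suc n)|"
  shows "\<not> |ctbl_subsets (\<Union>n. Xs n)| \<le>o |\<Union>n. Xs n|"
proof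
  let ?X = "\<Union>n. Xs n"
  assume "|ctbl_subsets ?X| \<le>o |?X|"
  then obtain f where f: "inj_on f (ctbl_subsets ?X)" "f ` ctbl_subsets ?X \<subseteq> ?X"
    unfolding card_of_ordLeq[symmetric] by blast
  \<comment> \<open>z n below avoids X_n and every countable set whose code lies in X_n\<close>
  define D where "D n = (\<Union>y \<in> {y \<in> ctbl_subsets ?X. f y \<in> Xs n}. y)" for n
  have mono: "m \<le> n \<Longrightarrow> Xs m \<subseteq> Xs n" for m n
    by (rule lift_Suc_mono_le[of Xs, OF chain])
  have "Xs (Suc n) - (D n \<union> Xs n) \<noteq> {}" for n
  proof
    have infinite: "infinite (Xs n)" using finite_subset[OF mono[of 0 n]] \<open>infinite (Xs 0)\<close> by blast
    have "|{y \<in> ctbl_subsets ?X. f y \<in> Xs n}| \<le>o |Xs n|"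
      by (rule card_of_ordLeqI[of f]) (use f(1) in \<open>auto simp: inj_on_def\<close>)
    then have "|D n| \<le>o |Xs n|" unfolding D_def
      by (rule card_of_UNION_ordLeq_infinite[OF infinite])
         (auto simp: ctbl_subsets_def intro: card_of_countable_ordLeq_infinite[OF _ infinite])
    then have "|D n \<union> Xs n| \<le>o |Xs n|"
      by (rule card_of_Un_ordLeq_infinite[OF infinite _ ordLeq_refl[OF card_of_Card_order]])
    moreover assume "Xs (Suc n) - (D n \<union> Xs n) = {}"
    then have "Xs (Suc n) \<subseteq> D n \<union> Xs n" by blast
    ultimately have "|Xs (Suc n)| \<le>o |Xs n|" by (rule ordLeq_transitive[OF card_of_mono1, rotated])
    then show False using not_ordLess_ordLeq[OF grow] by contradiction
  qed
  then have "\<forall>n. \<exists>z. z \<in> Xs (Suc n) - (D n \<union> Xs n)" by blast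
  then obtain z where z: "\<And>n. z n \<in> Xs (Suc n) - (D n \<union> Xs n)" by metis
  have "inj z"
  proof (rule linorder_injI)
    fix m n :: nat assume "m < n"
    then have "z m \<in> Xs n" using z[of m] mono[of "Suc m" n] by auto
    then show "z m \<noteq> z n" using z[of n] by auto
  qed
  have "range z \<in> ctbl_subsets ?X"
    unfolding ctbl_subsets_def using z range_inj_infinite[OF \<open>inj z\<close>] by auto
  moreover from this obtain n where "f (range z) \<in> Xs n" using f(2) by blast
  ultimately have "z n \<in> D n" unfolding D_def by blast
  then show False using z[of n] by blast
qed

lemma is_aleph_omegaE:
  assumes "is_aleph_omega X"
  obtains Xs where "\<And>n. Xs n \<subseteq> Xs (Suc n)" "infinite (Xs 0)" "\<And>n. |Xs n| <o |Xs (Suc n)|"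
    "|Xs 1| =o cardSuc natLeq" "X = (\<Union>n. Xs n)"
proof -
  obtain Xs where X0: "countable (Xs 0)" "infinite (Xs 0)"
    and chain: "\<And>n. Xs n \<subseteq> Xs (Suc n)" and succ: "\<And>n. |Xs (Suc n)| =o cardSuc |Xs n|"
    and X: "X = (\<Union>n. Xs n)"
    using assms unfolding is_aleph_omega_def by blast
  have grow: "|Xs n| <o |Xs (Suc n)|" for n
    by (rule ordLess_ordIso_trans[OF cardSuc_greater[OF card_of_Card_order]
          ordIso_symmetric[OF succ]])
  have "cardSuc |Xs 0| =o cardSuc natLeq"
    by (rule cardSuc_invar_ordIso[OF card_of_Card_order natLeq_Card_order, THEN iffD2,
          OF card_of_countable_infinite[OF X0]])
  then have "|Xs 1| =o cardSuc natLeq"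
    unfolding One_nat_def by (rule ordIso_transitive[OF succ])
  then show ?thesis by (rule that[OF chain X0(2) grow _ X])
qed

lemma is_aleph_omega_infinite:
  assumes "is_aleph_omega X"
  shows "infinite X"
proof -
  obtain Xs :: "nat \<Rightarrow> 'a set" where "infinite (Xs 0)" "X = (\<Union>n. Xs n)"
    using assms by (rule is_aleph_omegaE) blast
  then show ?thesis using finite_subset[of "Xs 0" X] by blast
qed

lemma is_aleph_omega_ge_aleph_one:
  assumes "is_aleph_omega X"
  shows "|Field (cardSuc natLeq)| \<le>o |X|"
proof -
  obtain Xs :: "nat \<Rightarrow> 'a set" where Xs1: "|Xs 1| =o cardSuc natLeq" and X: "X = (\<Union>n. Xs n)"
    using assms by (rule is_aleph_omegaE) blast
  have "|Field (cardSuc natLeq)| =o |Xs 1|"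
    by (rule ordIso_transitive[OF card_of_Field_ordIso[OF cardSuc_Card_order[OF natLeq_Card_order]]
          ordIso_symmetric[OF Xs1]])
  moreover have "|Xs 1| \<le>o |X|" unfolding X by (rule card_of_mono1) blast
  ultimately show ?thesis by (rule ordIso_ordLeq_trans)
qed

lemma infinite_Field_cardSuc_natLeq: "infinite (Field (cardSuc natLeq))"
  using cardSuc_finite[OF natLeq_Card_order] by (simp add: Field_natLeq)

lemma GCH_card_of_Pow_countable:
  assumes "GCH_on_type TYPE('a)" "countable (A :: 'a set)" "infinite A"
  shows "|Pow A| =o cardSuc natLeq"
proof -
  have "|Pow A| =o cardSuc |A|" using assms(1,3) unfolding GCH_on_type_def by blast
  moreover have "cardSuc |A| =o cardSuc natLeq"
    by (rule cardSuc_invar_ordIso[OF card_of_Card_order natLeq_Card_order, THEN iffD2,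
          OF card_of_countable_infinite[OF assms(2,3)]])
  ultimately show ?thesis by (rule ordIso_transitive)
qed

lemma GCH_card_of_ctbl_subsets_countable:
  assumes "GCH_on_type TYPE('a)" "countable (A :: 'a set)" "infinite A"
  shows "|ctbl_subsets A| \<le>o |Field (cardSuc natLeq)|"
proof -
  have "|ctbl_subsets A| \<le>o |Pow A|" by (rule card_of_mono1) (auto simp: ctbl_subsets_def)
  also have "|Pow A| =o cardSuc natLeq" by (rule GCH_card_of_Pow_countable[OF assms])
  also have "cardSuc natLeq =o |Field (cardSuc natLeq)|"
    by (rule ordIso_symmetric[OF card_of_Field_ordIso[OF cardSuc_Card_order[OF natLeq_Card_order]]])
  finally show ?thesis .
qed

lemma GCH_card_of_ctbl_subsets_aleph_omega:
  assumes "GCH_on_type TYPE('a)" "is_aleph_omega (X :: 'a set)"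
  shows "|ctbl_subsets X| =o cardSuc |X|"
proof -
  have "|ctbl_subsets X| \<le>o |Pow X|" by (rule card_of_mono1) (auto simp: ctbl_subsets_def)
  moreover have "|Pow X| =o cardSuc |X|"
    using assms(1) is_aleph_omega_infinite[OF assms(2)] unfolding GCH_on_type_def by blast
  ultimately have "|ctbl_subsets X| \<le>o cardSuc |X|" by (rule ordLeq_ordIso_trans)
  moreover have "|X| <o |ctbl_subsets X|"
  proof -
    obtain Xs :: "nat \<Rightarrow> 'a set" where Xs: "\<And>n. Xs n \<subseteq> Xs (Suc n)" "infinite (Xs 0)"
      "\<And>n. |Xs n| <o |Xs (Suc n)|" and X: "X = (\<Union>n. Xs n)"
      using assms(2) by (rule is_aleph_omegaE) blast
    have "\<not> |ctbl_subsets X| \<le>o |X|"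
      using card_of_ctbl_subsets_not_ordLeq[OF Xs] by (simp add: X)
    then show ?thesis
      by (simp add: not_ordLeq_iff_ordLess[OF card_of_Well_order card_of_Well_order])
  qed
  then have "cardSuc |X| \<le>o |ctbl_subsets X|"
    by (rule cardSuc_ordLess_ordLeq[OF card_of_Card_order card_of_Card_order, THEN iffD1])
  ultimately show ?thesis by (simp only: ordIso_iff_ordLeq)
qed

lemma GCH_card_of_UN_ctbl_subsets:
  assumes "GCH_on_type TYPE('a)" "countable (A :: 'a set)" "infinite A"
    and "\<And>x. x \<in> ctbl_subsets A \<Longrightarrow> countable (F x)"
  shows "|\<Union>x \<in> ctbl_subsets A. F x| \<le>o |Field (cardSuc natLeq)|"
proof (rule card_of_UNION_ordLeq_infinite[OF infinite_Field_cardSuc_natLeq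
      GCH_card_of_ctbl_subsets_countable[OF assms(1-3)]], rule ballI)
  fix x assume "x \<in> ctbl_subsets A"
  then show "|F x| \<le>o |Field (cardSuc natLeq)|"
    using card_of_countable_ordLeq_infinite[OF assms(4) infinite_Field_cardSuc_natLeq] by blast
qed

theorem lemma8:
  fixes X :: "'a set" and F :: "'a set \<Rightarrow> 'a set set"
  assumes GCH: "GCH_on_type TYPE('a)"
    and X: "is_aleph_omega X"
    and F: "\<forall>x \<in> ctbl_subsets X. F x \<in> ctbl_subsets (ctbl_subsets X)"
  shows "\<exists>a :: 'a set \<Rightarrow> nat set \<Rightarrow> 'a set.
     bij_betw (\<lambda>(\<alpha>, j). a \<alpha> j)
       (Field (cardSuc (card_of X)) \<times> Field (cardSuc natLeq)) (ctbl_subsets X) \<and>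
     (\<forall>\<alpha> \<in> Field (cardSuc (card_of X)). \<forall>j \<in> Field (cardSuc natLeq).
        \<forall>x \<in> ctbl_subsets (a \<alpha> j).
          F x \<subseteq> {a \<eta> i | \<eta> i. \<eta> \<in> Field (cardSuc (card_of X)) \<and> (\<eta>, \<alpha>) \<in> cardSuc (card_of X)\<and>
                                 i \<in> Field (cardSuc natLeq)})"
proof -
  let ?W = "Field (cardSuc natLeq)"
  have F_sub: "F x \<in> ctbl_subsets (ctbl_subsets X)"
    if "a \<in> ctbl_subsets X" "x \<in> ctbl_subsets a" for a x
    by (rule F[rule_format]) (use that in \<open>auto simp: ctbl_subsets_def\<close>)
  interpret bounded_operation "ctbl_subsets X" "\<lambda>a. \<Union>x \<in> ctbl_subsets a. F x" X ?W
  proof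
    show "infinite X" by (rule is_aleph_omega_infinite[OF X])
    show "infinite ?W" by (rule infinite_Field_cardSuc_natLeq)
    show "|?W| \<le>o |X|" by (rule is_aleph_omega_ge_aleph_one[OF X])
    show "|ctbl_subsets X| =o cardSuc |X|" by (rule GCH_card_of_ctbl_subsets_aleph_omega[OF GCH X])
  next
    fix a assume "a \<in> ctbl_subsets X"
    then show "(\<Union>x \<in> ctbl_subsets a. F x) \<subseteq> ctbl_subsets X"
      using F_sub by (auto simp: ctbl_subsets_def)
  next
    fix a assume "a \<in> ctbl_subsets X"
    then show "|\<Union>x \<in> ctbl_subsets a. F x| \<le>o |?W|"
      using F_sub by (intro GCH_card_of_UN_ctbl_subsets[OF GCH]) (auto simp: ctbl_subsets_def)
  qed
  show ?thesis using ex_layered_enumeration by (simp only: UN_subset_iff)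
qed

end
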